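(* Let $R$ be a commutative ring, $\mathrm{S}_{11}(R)$ as below, $\mathrm{B}_3(R)$ the upper triangular $3\times3$ matrices, and $M'=\mathrm{B}_3(R)/\mathrm{S}_{11}(R)$, a free $R$-module of rank $1$ generated by the class $\overline{E}_{11}$ of $E_{11}$. Then $H^0(\mathrm{S}_{11}(R),M')\cong R$ and $H^n(\mathrm{S}_{11}(R),M')=0$ for all $n>0$.
   Context: $\mathrm{S}_{11}(R)=\left\{\begin{pmatrix}a&b&c\\0&e&d\\0&0&a\end{pmatrix}\mid a,b,c,d,e\in R\right\}\subseteq\mathrm{M}_3(R)$. $M'$ is an $\mathrm{S}_{11}(R)$-bimodule via matrix multiplication (a matrix acts on $\overline{E}_{11}$ on either side by its $(1,1)$-entry). $H^n$ is Hochschild cohomology. *)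

theory Defs
  imports Main
begin

text \<open>3x3 matrices over R are represented as functions on indices, with indices 0,1,2
 (entries outside the 3x3 range are zero for all matrices considered).\<close>
type_synonym 'a m3 = "nat \<Rightarrow> nat \<Rightarrow> 'a"

definition mmul :: "'a::comm_ring_1 m3 \<Rightarrow> 'a m3 \<Rightarrow> 'a m3" where
  "mmul A B = (\<lambda>i j. \<Sum>k<3. A i k * B k j)"

definition madd :: "'a::comm_ring_1 m3 \<Rightarrow> 'a m3 \<Rightarrow> 'a m3" where
  "madd A B = (\<lambda>i j. A i j + B i j)"

definition msmul :: "'a::comm_ring_1 \<Rightarrow> 'a m3 \<Rightarrow> 'a m3" where
  "msmul r A = (\<lambda>i j. r * A i j)"

definition mk11 :: "'a::comm_ring_1 \<Rightarrow> 'a \<Rightarrow> 'a \<Rightarrow> 'a \<Rightarrow> 'a \<Rightarrow> 'a m3" where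
  "mk11 a b c d e = (\<lambda>i j.
     if i = 0 \<and> j = 0 then a else
     if i = 0 \<and> j = 1 then b else
     if i = 0 \<and> j = 2 then c else
     if i = 1 \<and> j = 1 then e else
     if i = 1 \<and> j = 2 then d else
     if i = 2 \<and> j = 2 then a else 0)"

definition S11 :: "'a::comm_ring_1 m3 set" where
  "S11 = {mk11 a b c d e | a b c d e. True}"

text \<open>The bimodule M' = B_3(R)/S_11(R), free of rank 1 on the class of E_11, identified
 with R via r \<mapsto> r * class(E_11); a matrix acts on either side by its (1,1)-entry.\<close>
definition lact :: "'a::comm_ring_1 m3 \<Rightarrow> 'a \<Rightarrow> 'a" where
  "lact A m = A 0 0 * m"

definition ract :: "'a::comm_ring_1 \<Rightarrow> 'a m3 \<Rightarrow> 'a" where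
  "ract m A = m * A 0 0"

text \<open>Hochschild cochains C^n(A,M) = Hom_R(A^{\<otimes> n}, M), represented as R-multilinear
 maps on n-tuples (lists of length n) of elements of A, extended by 0 elsewhere.\<close>
definition cochains :: "'a::comm_ring_1 m3 set \<Rightarrow> nat \<Rightarrow> ('a m3 list \<Rightarrow> 'a) set" where
  "cochains A n = {f.
     (\<forall>xs. \<not> (length xs = n \<and> set xs \<subseteq> A) \<longrightarrow> f xs = 0) \<and>
     (\<forall>i<n. \<forall>xs y z r. length xs = n \<and> set xs \<subseteq> A \<and> y \<in> A \<and> z \<in> A \<longrightarrow>
         f (xs[i := madd y z]) = f (xs[i := y]) + f (xs[i := z]) \<and>
         f (xs[i := msmul r y]) = r * f (xs[i := y]))}"

definition hdiff :: "'a::comm_ring_1 m3 set \<Rightarrow> ('a m3 \<Rightarrow> 'a \<Rightarrow> 'a) \<Rightarrow> ('a \<Rightarrow> 'a m3 \<Rightarrow> 'a)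
    \<Rightarrow> nat \<Rightarrow> ('a m3 list \<Rightarrow> 'a) \<Rightarrow> 'a m3 list \<Rightarrow> 'a" where
  "hdiff A L Rt n f xs =
     (if length xs = Suc n \<and> set xs \<subseteq> A then
        L (xs ! 0) (f (tl xs))
        + (\<Sum>i<n. (-1) ^ (i + 1) * f (take i xs @ [mmul (xs ! i) (xs ! (i + 1))] @ drop (i + 2) xs))
        + (-1) ^ (n + 1) * Rt (f (take n xs)) (xs ! n)
      else 0)"

definition cocycles :: "'a::comm_ring_1 m3 set \<Rightarrow> ('a m3 \<Rightarrow> 'a \<Rightarrow> 'a) \<Rightarrow> ('a \<Rightarrow> 'a m3 \<Rightarrow> 'a)
    \<Rightarrow> nat \<Rightarrow> ('a m3 list \<Rightarrow> 'a) set" where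
  "cocycles A L Rt n = {f \<in> cochains A n. hdiff A L Rt n f = (\<lambda>_. 0)}"

definition coboundaries :: "'a::comm_ring_1 m3 set \<Rightarrow> ('a m3 \<Rightarrow> 'a \<Rightarrow> 'a) \<Rightarrow> ('a \<Rightarrow> 'a m3 \<Rightarrow> 'a)
    \<Rightarrow> nat \<Rightarrow> ('a m3 list \<Rightarrow> 'a) set" where
  "coboundaries A L Rt n = (case n of 0 \<Rightarrow> {\<lambda>_. 0} | Suc k \<Rightarrow> hdiff A L Rt k ` cochains A k)"

text \<open>H^n = cocycles / coboundaries; H^n = 0 iff every cocycle is a coboundary.\<close>
definition hochschild_vanishes where
  "hochschild_vanishes A L Rt n \<longleftrightarrow> cocycles A L Rt n \<subseteq> coboundaries A L Rt n"

end

theory Submission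
  imports Defs
begin

text \<open>Both actions on \<open>M' \<cong> R\<close> are multiplication by the character \<open>\<chi>(x) = x\<^sub>1\<^sub>1\<close>.
  In degree 0 the differential \<open>m \<mapsto> \<chi>(x) m - m \<chi>(x)\<close> vanishes because \<open>R\<close> is commutative,
  so \<open>H\<^sup>0 = C\<^sup>0 = R\<close>. A 1-cocycle is a \<open>\<chi>\<close>-derivation, and evaluating the cocycle identity on
  suitable products of the basis \<open>E\<^sub>1\<^sub>1 + E\<^sub>3\<^sub>3, E\<^sub>1\<^sub>2, E\<^sub>1\<^sub>3, E\<^sub>2\<^sub>3, E\<^sub>2\<^sub>2\<close> of \<open>S\<^sub>1\<^sub>1(R)\<close> shows that it
  vanishes. In degrees \<open>n \<ge> 2\<close>, contracting an \<open>n\<close>-cocycle \<open>f\<close> with the idempotent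
  \<open>e = E\<^sub>1\<^sub>1 + E\<^sub>3\<^sub>3\<close>, for which \<open>\<chi>(e) = 1\<close>, gives an \<open>(n-1)\<close>-cochain whose coboundary differs from
  \<open>f\<close> only through the \<open>E\<^sub>1\<^sub>2\<close>- and \<open>E\<^sub>1\<^sub>3\<close>-coordinates of the first argument; these error terms are
  cancelled by the coboundaries of cup products of the coordinate functionals \<open>x \<mapsto> x\<^sub>1\<^sub>2\<close>, \<open>x \<mapsto> x\<^sub>1\<^sub>3\<close> with
  the contractions of \<open>f\<close> with the pairs \<open>(E\<^sub>1\<^sub>2, E\<^sub>2\<^sub>2)\<close>, \<open>(E\<^sub>1\<^sub>2, E\<^sub>2\<^sub>3)\<close>, giving an explicit primitive.\<close>

lemma mmul_mk11: "mmul (mk11 a b c d e) (mk11 a' b' c' d' e') =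
    mk11 (a * a') (a * b' + b * e') (a * c' + b * d' + c * a') (e * d' + d * a') (e * e')"
  by (auto simp: mmul_def mk11_def fun_eq_iff eval_nat_numeral algebra_simps)

lemma madd_mk11: "madd (mk11 a b c d e) (mk11 a' b' c' d' e') =
    mk11 (a + a') (b + b') (c + c') (d + d') (e + e')"
  by (auto simp: madd_def mk11_def fun_eq_iff)

lemma msmul_mk11: "msmul r (mk11 a b c d e) = mk11 (r * a) (r * b) (r * c) (r * d) (r * e)"
  by (auto simp: msmul_def mk11_def fun_eq_iff)

lemma mk11_first_row [simp]:
  "mk11 a b c d e 0 0 = a" "mk11 a b c d e 0 (Suc 0) = b" "mk11 a b c d e 0 2 = c"
  by (auto simp: mk11_def)

lemma mk11_in_S11 [simp]: "mk11 a b c d e \<in> S11"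
  unfolding S11_def by blast

lemma S11E [elim!]:
  assumes "x \<in> S11"
  obtains a b c d e where "x = mk11 a b c d e"
  using assms by (auto simp: S11_def)

lemma S11_mmul_closed: "x \<in> S11 \<Longrightarrow> y \<in> S11 \<Longrightarrow> mmul x y \<in> S11"
  and S11_madd_closed: "x \<in> S11 \<Longrightarrow> y \<in> S11 \<Longrightarrow> madd x y \<in> S11"
  and S11_msmul_closed: "x \<in> S11 \<Longrightarrow> msmul r x \<in> S11"
  by (auto simp: mmul_mk11 madd_mk11 msmul_mk11)

abbreviation "E11_33 \<equiv> mk11 1 0 0 0 0"
abbreviation "E12 \<equiv> mk11 0 1 0 0 0"
abbreviation "E13 \<equiv> mk11 0 0 1 0 0"
abbreviation "E23 \<equiv> mk11 0 0 0 1 0"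
abbreviation "E22 \<equiv> mk11 0 0 0 0 1"

lemma mk11_basis_expansion: "mk11 a b c d e =
    madd (msmul a E11_33) (madd (msmul b E12) (madd (msmul c E13) (madd (msmul d E23) (msmul e E22))))"
  by (simp add: madd_mk11 msmul_mk11)

lemma cochain_eq_0: "f \<in> cochains A n \<Longrightarrow> \<not> (length xs = n \<and> set xs \<subseteq> A) \<Longrightarrow> f xs = 0"
  unfolding cochains_def by blast

lemma cochain_update_madd:
  "\<lbrakk>f \<in> cochains A n; i < n; length xs = n; set xs \<subseteq> A; y \<in> A; z \<in> A\<rbrakk>
    \<Longrightarrow> f (xs[i := madd y z]) = f (xs[i := y]) + f (xs[i := z])"
  unfolding cochains_def by blast

lemma cochain_update_msmul:
  "\<lbrakk>f \<in> cochains A n; i < n; length xs = n; set xs \<subseteq> A; y \<in> A\<rbrakk>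
    \<Longrightarrow> f (xs[i := msmul r y]) = r * f (xs[i := y])"
  unfolding cochains_def by blast

lemma cochain_update_mk11:
  assumes "f \<in> cochains S11 n" "i < n" "length xs = n" "set xs \<subseteq> S11"
  shows "f (xs[i := mk11 a b c d e]) = a * f (xs[i := E11_33]) + b * f (xs[i := E12])
    + c * f (xs[i := E13]) + d * f (xs[i := E23]) + e * f (xs[i := E22])"
  by (subst mk11_basis_expansion)
    (simp add: cochain_update_madd[OF assms] cochain_update_msmul[OF assms]
      S11_madd_closed S11_msmul_closed)

lemma cochain_Cons_mk11:
  assumes "f \<in> cochains S11 (Suc k)" "length t = k" "set t \<subseteq> S11"
  shows "f (mk11 a b c d e # t) = a * f (E11_33 # t) + b * f (E12 # t) + c * f (E13 # t)
    + d * f (E23 # t) + e * f (E22 # t)"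
  using cochain_update_mk11[OF assms(1), of 0 "E11_33 # t" a b c d e] assms by simp

lemma cochain_Cons_Cons_mk11:
  assumes "f \<in> cochains S11 (Suc (Suc k))" "y \<in> S11" "length t = k" "set t \<subseteq> S11"
  shows "f (y # mk11 a b c d e # t) = a * f (y # E11_33 # t) + b * f (y # E12 # t)
    + c * f (y # E13 # t) + d * f (y # E23 # t) + e * f (y # E22 # t)"
  using cochain_update_mk11[OF assms(1), of "Suc 0" "y # E11_33 # t" a b c d e] assms by simp

lemma cocycle_cochain: "f \<in> cocycles A L Rt n \<Longrightarrow> f \<in> cochains A n"
  by (simp add: cocycles_def)

lemma cocycle_hdiff_eq_0: "f \<in> cocycles A L Rt n \<Longrightarrow> hdiff A L Rt n f xs = 0"
  unfolding cocycles_def by (auto dest: fun_cong)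

lemma hdiff_cong:
  assumes closed: "\<And>x y. x \<in> A \<Longrightarrow> y \<in> A \<Longrightarrow> mmul x y \<in> A"
    and eq: "\<And>ys. length ys = n \<Longrightarrow> set ys \<subseteq> A \<Longrightarrow> F ys = G ys"
  shows "hdiff A L Rt n F = hdiff A L Rt n G"
proof
  fix xs
  show "hdiff A L Rt n F xs = hdiff A L Rt n G xs"
  proof (cases "length xs = Suc n \<and> set xs \<subseteq> A")
    case True
    then have "set (tl xs) \<subseteq> A" by (cases xs) auto
    then have tl: "F (tl xs) = G (tl xs)" using True by (intro eq) auto
    have take: "F (take n xs) = G (take n xs)" using True by (intro eq) (auto dest: in_set_takeD)
    have merge: "F (take i xs @ [mmul (xs ! i) (xs ! (i + 1))] @ drop (i + 2) xs)
        = G (take i xs @ [mmul (xs ! i) (xs ! (i + 1))] @ drop (i + 2) xs)" if "i < n" for i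
    proof (rule eq)
      have "xs ! i \<in> A" "xs ! (i + 1) \<in> A" using True that by (auto simp: subset_iff)
      then show "set (take i xs @ [mmul (xs ! i) (xs ! (i + 1))] @ drop (i + 2) xs) \<subseteq> A"
        using True by (auto dest: in_set_takeD in_set_dropD intro: closed)
    qed (use True that in auto)
    have "(\<Sum>i<n. (-1) ^ (i + 1) * F (take i xs @ [mmul (xs ! i) (xs ! (i + 1))] @ drop (i + 2) xs))
        = (\<Sum>i<n. (-1) ^ (i + 1) * G (take i xs @ [mmul (xs ! i) (xs ! (i + 1))] @ drop (i + 2) xs))"
      using merge by (intro sum.cong) auto
    then show ?thesis unfolding hdiff_def by (simp only: tl take)
  qed (auto simp: hdiff_def)
qed

lemma hdiff_diff:
  "hdiff A lact ract n (\<lambda>ys. F ys - G ys) xs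
    = hdiff A lact ract n F xs - hdiff A lact ract n G xs"
  unfolding hdiff_def lact_def ract_def
  by (simp add: right_diff_distrib sum_subtractf sum_negf algebra_simps)

lemma hdiff_Cons_contract:
  assumes "u \<in> A" "y \<in> A" "set t \<subseteq> A" "length t = k"
  shows "hdiff A L Rt (Suc k) f (u # y # t) + hdiff A L Rt k (\<lambda>ys. f (u # ys)) (y # t)
    = L u (f (y # t)) - f (mmul u y # t) + L y (f (u # t))"
  using assms unfolding hdiff_def
  by (simp add: sum.lessThan_Suc_shift algebra_simps sum_negf del: sum.lessThan_Suc)

lemma cocycle_hdiff_contract:
  assumes "f \<in> cocycles A L Rt (Suc k)" "u \<in> A" "y \<in> A" "set t \<subseteq> A" "length t = k"
  shows "hdiff A L Rt k (\<lambda>ys. f (u # ys)) (y # t) = L u (f (y # t)) - f (mmul u y # t) + L y (f (u # t))"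
  using hdiff_Cons_contract[OF assms(2-5), of L Rt f] cocycle_hdiff_eq_0[OF assms(1)] by simp

definition cup :: "('a::comm_ring_1 m3 \<Rightarrow> 'a) \<Rightarrow> ('a m3 list \<Rightarrow> 'a) \<Rightarrow> 'a m3 list \<Rightarrow> 'a" where
  "cup \<alpha> p ys = \<alpha> (hd ys) * p (tl ys)"

lemma hdiff_cup:
  assumes "x \<in> A" "y \<in> A" "set t \<subseteq> A" "length t = k"
  shows "hdiff A lact ract (Suc k) (cup \<alpha> p) (x # y # t) + \<alpha> x * hdiff A lact ract k p (y # t)
    = (x 0 0 * \<alpha> y - \<alpha> (mmul x y) + \<alpha> x * y 0 0) * p t"
  using assms unfolding hdiff_def lact_def ract_def cup_def
  by (simp add: sum.lessThan_Suc_shift algebra_simps sum_distrib_left sum_negf del: sum.lessThan_Suc)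

section \<open>Degrees 0 and 1\<close>

lemma cocycles_0_iff: "f \<in> cocycles A lact ract 0 \<longleftrightarrow> (\<forall>xs. xs \<noteq> [] \<longrightarrow> f xs = 0)"
proof
  assume "f \<in> cocycles A lact ract 0"
  then show "\<forall>xs. xs \<noteq> [] \<longrightarrow> f xs = 0" by (auto simp: cocycles_def cochains_def)
next
  assume vanish: "\<forall>xs. xs \<noteq> [] \<longrightarrow> f xs = 0"
  have "f \<in> cochains A 0" using vanish by (auto simp: cochains_def)
  moreover have "hdiff A lact ract 0 f = (\<lambda>_. 0)"
    by (auto simp: fun_eq_iff hdiff_def lact_def ract_def mult.commute length_Suc_conv)
  ultimately show "f \<in> cocycles A lact ract 0" by (simp add: cocycles_def)
qed

lemma cocycle_1_S11_eq_0:
  assumes fc: "f \<in> cocycles S11 lact ract (Suc 0)"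
  shows "f = (\<lambda>_. 0)"
proof
  have f: "f \<in> cochains S11 (Suc 0)" using fc by (rule cocycle_cochain)
  have derivation: "u 0 0 * f [v] - f [mmul u v] + f [u] * v 0 0 = 0" if "u \<in> S11" "v \<in> S11" for u v
    using cocycle_hdiff_eq_0[OF fc, of "[u, v]"] that by (simp add: hdiff_def lact_def ract_def)
  have basis: "f [E11_33] = 0" "f [E12] = 0" "f [E13] = 0" "f [E23] = 0" "f [E22] = 0"
    using derivation[of E11_33 E11_33] derivation[of E12 E22] derivation[of E12 E23]
      derivation[of E22 E23] derivation[of E22 E22]
    by (simp_all add: mmul_mk11)
  fix xs
  show "f xs = 0"
  proof (cases "length xs = Suc 0 \<and> set xs \<subseteq> S11")
    case True
    then obtain a b c d e where "xs = [mk11 a b c d e]" by (auto simp: length_Suc_conv)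
    then show ?thesis using cochain_Cons_mk11[OF f, of "[]" a b c d e] basis by simp
  qed (rule cochain_eq_0[OF f])
qed

lemma hochschild_vanishes_S11_1: "hochschild_vanishes S11 lact ract (Suc 0)"
proof -
  have "(\<lambda>_. 0) \<in> cochains (S11 :: 'a::comm_ring_1 m3 set) 0" by (simp add: cochains_def)
  moreover have "hdiff S11 lact ract 0 (\<lambda>_. 0) = (\<lambda>_. (0::'a))"
    by (simp add: fun_eq_iff hdiff_def lact_def ract_def)
  ultimately have "(\<lambda>_. 0) \<in> coboundaries (S11 :: 'a m3 set) lact ract (Suc 0)"
    by (force simp: coboundaries_def)
  then show ?thesis
    unfolding hochschild_vanishes_def using cocycle_1_S11_eq_0 by blast
qed

section \<open>A contracting homotopy in degrees \<open>\<ge> 2\<close>\<close>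

text \<open>Indices start at 0: \<open>x 0 2\<close> and \<open>x 0 1\<close> are the \<open>(1,3)\<close>- and \<open>(1,2)\<close>-entries of \<open>x\<close>.\<close>

definition s11_homotopy :: "('a::comm_ring_1 m3 list \<Rightarrow> 'a) \<Rightarrow> nat \<Rightarrow> 'a m3 list \<Rightarrow> 'a" where
  "s11_homotopy f k ys = (if length ys = Suc k \<and> set ys \<subseteq> S11 then
     f (E11_33 # ys) - cup (\<lambda>x. x 0 2) (\<lambda>zs. f (E12 # E23 # zs)) ys
       - cup (\<lambda>x. x 0 1) (\<lambda>zs. f (E12 # E22 # zs)) ys
   else 0)"

lemma s11_homotopy_cochain:
  assumes f: "f \<in> cochains S11 (Suc (Suc k))"
  shows "s11_homotopy f k \<in> cochains S11 (Suc k)"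
  unfolding cochains_def mem_Collect_eq
proof (intro conjI allI impI)
  fix xs :: "'a m3 list"
  assume "\<not> (length xs = Suc k \<and> set xs \<subseteq> S11)"
  then show "s11_homotopy f k xs = 0" unfolding s11_homotopy_def by (rule if_not_P)
next
  fix i and xs :: "'a m3 list" and y z :: "'a m3" and r :: 'a
  assume i: "i < Suc k" and h: "length xs = Suc k \<and> set xs \<subseteq> S11 \<and> y \<in> S11 \<and> z \<in> S11"
  obtain x0 t where xs: "xs = x0 # t" using h by (cases xs) auto
  have t: "length t = k" "set t \<subseteq> S11" "x0 \<in> S11" using h xs by auto
  have yz: "y \<in> S11" "z \<in> S11" "madd y z \<in> S11" "msmul r y \<in> S11"
    using h by (auto intro: S11_madd_closed S11_msmul_closed)
  have "s11_homotopy f k (xs[i := madd y z]) = s11_homotopy f k (xs[i := y]) + s11_homotopy f k (xs[i := z])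
    \<and> s11_homotopy f k (xs[i := msmul r y]) = r * s11_homotopy f k (xs[i := y])"
  proof (cases i)
    case 0
    have "f (E11_33 # madd y z # t) = f (E11_33 # y # t) + f (E11_33 # z # t)"
      using cochain_update_madd[OF f, of "Suc 0" "E11_33 # x0 # t" y z] t yz by simp
    moreover have "f (E11_33 # msmul r y # t) = r * f (E11_33 # y # t)"
      using cochain_update_msmul[OF f, of "Suc 0" "E11_33 # x0 # t" y r] t yz by simp
    ultimately show ?thesis
      using 0 xs t yz by (simp add: s11_homotopy_def cup_def madd_def msmul_def algebra_simps)
  next
    case (Suc j)
    have j: "j < k" using i Suc by simp
    have "set (t[j := w]) \<subseteq> S11" if "w \<in> S11" for w
      using t(2) that set_update_subset_insert by fastforce
    moreover have "f (u # v # t[j := madd y z]) = f (u # v # t[j := y]) + f (u # v # t[j := z])"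
      if "u \<in> S11" "v \<in> S11" for u v
      using cochain_update_madd[OF f, of "Suc (Suc j)" "u # v # t" y z] t yz j that by simp
    moreover have "f (u # v # t[j := msmul r y]) = r * f (u # v # t[j := y])"
      if "u \<in> S11" "v \<in> S11" for u v
      using cochain_update_msmul[OF f, of "Suc (Suc j)" "u # v # t" y r] t yz j that by simp
    ultimately show ?thesis
      using Suc xs t yz by (simp add: s11_homotopy_def cup_def algebra_simps)
  qed
  then show "s11_homotopy f k (xs[i := madd y z]) = s11_homotopy f k (xs[i := y]) + s11_homotopy f k (xs[i := z])"
    and "s11_homotopy f k (xs[i := msmul r y]) = r * s11_homotopy f k (xs[i := y])"
    by blast+
qed

context
  fixes f :: "'a::comm_ring_1 m3 list \<Rightarrow> 'a" and k :: nat and t :: "'a m3 list"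
  assumes fc: "f \<in> cocycles S11 lact ract (Suc (Suc k))"
    and t: "set t \<subseteq> S11" "length t = k"
begin

private lemma f_cochain: "f \<in> cochains S11 (Suc (Suc k))"
  using fc by (rule cocycle_cochain)

lemma hdiff_contract_E11_33:
  "hdiff S11 lact ract (Suc k) (\<lambda>ys. f (E11_33 # ys)) (mk11 a b c d e # y # t)
    = f (mk11 a b c d e # y # t) - b * f (E12 # y # t) - c * f (E13 # y # t)"
  if "y \<in> S11"
  using cocycle_hdiff_contract[OF fc, of E11_33 "mk11 a b c d e" "y # t"]
    cochain_Cons_mk11[OF f_cochain, of "y # t" a b c 0 0] that t
  by (simp add: mmul_mk11 lact_def)

lemma hdiff_contract_E12_E23:
  "hdiff S11 lact ract k (\<lambda>zs. f (E12 # E23 # zs)) (mk11 a b c d e # t) = f (E13 # mk11 a b c d e # t)"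
  using hdiff_Cons_contract[of E23 S11 "mk11 a b c d e" t k lact ract "\<lambda>zs. f (E12 # zs)"]
    cocycle_hdiff_contract[OF fc, of E12 E23 "mk11 a b c d e # t"]
    cochain_Cons_Cons_mk11[OF f_cochain, of E12 t 0 0 0 a 0] t
  by (simp add: mmul_mk11 lact_def)

lemma hdiff_contract_E12_E22:
  "hdiff S11 lact ract k (\<lambda>zs. f (E12 # E22 # zs)) (mk11 a b c d e # t)
    = f (E12 # mk11 a b c d e # t) + (a - e) * f (E12 # E22 # t) - d * f (E12 # E23 # t)"
  using hdiff_Cons_contract[of E22 S11 "mk11 a b c d e" t k lact ract "\<lambda>zs. f (E12 # zs)"]
    cocycle_hdiff_contract[OF fc, of E12 E22 "mk11 a b c d e # t"]
    cochain_Cons_Cons_mk11[OF f_cochain, of E12 t 0 0 0 d e] t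
  by (simp add: mmul_mk11 lact_def algebra_simps)

lemma hdiff_cup_entry13:
  "hdiff S11 lact ract (Suc k) (cup (\<lambda>x. x 0 2) (\<lambda>zs. f (E12 # E23 # zs)))
      (mk11 a b c d e # mk11 a' b' c' d' e' # t)
    = - (b * d') * f (E12 # E23 # t) - c * f (E13 # mk11 a' b' c' d' e' # t)"
  using hdiff_cup[of "mk11 a b c d e" S11 "mk11 a' b' c' d' e'" t k
      "\<lambda>x. x 0 2" "\<lambda>zs. f (E12 # E23 # zs)"]
    hdiff_contract_E12_E23[of a' b' c' d' e'] t
  by (simp add: mmul_mk11 algebra_simps)

lemma hdiff_cup_entry12:
  "hdiff S11 lact ract (Suc k) (cup (\<lambda>x. x 0 1) (\<lambda>zs. f (E12 # E22 # zs)))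
      (mk11 a b c d e # mk11 a' b' c' d' e' # t)
    = b * d' * f (E12 # E23 # t) - b * f (E12 # mk11 a' b' c' d' e' # t)"
  using hdiff_cup[of "mk11 a b c d e" S11 "mk11 a' b' c' d' e'" t k
      "\<lambda>x. x 0 1" "\<lambda>zs. f (E12 # E22 # zs)"]
    hdiff_contract_E12_E22[of a' b' c' d' e'] t
  by (simp add: mmul_mk11 algebra_simps)

lemma hdiff_s11_homotopy: "hdiff S11 lact ract (Suc k) (s11_homotopy f k) (x # y # t) = f (x # y # t)"
  if "x \<in> S11" "y \<in> S11"
proof -
  obtain a b c d e where x: "x = mk11 a b c d e" using \<open>x \<in> S11\<close> by blast
  obtain a' b' c' d' e' where y: "y = mk11 a' b' c' d' e'" using \<open>y \<in> S11\<close> by blast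
  let ?P = "\<lambda>ys. f (E11_33 # ys)"
    and ?Q = "cup (\<lambda>x. x 0 2) (\<lambda>zs. f (E12 # E23 # zs))"
    and ?B = "cup (\<lambda>x. x 0 1) (\<lambda>zs. f (E12 # E22 # zs))"
  have "hdiff S11 lact ract (Suc k) (s11_homotopy f k)
      = hdiff S11 lact ract (Suc k) (\<lambda>ys. ?P ys - ?Q ys - ?B ys)"
    by (rule hdiff_cong) (simp_all add: s11_homotopy_def S11_mmul_closed)
  then have "hdiff S11 lact ract (Suc k) (s11_homotopy f k) (x # y # t)
      = hdiff S11 lact ract (Suc k) ?P (x # y # t) - hdiff S11 lact ract (Suc k) ?Q (x # y # t)
        - hdiff S11 lact ract (Suc k) ?B (x # y # t)"
    by (simp only: hdiff_diff)
  also have "\<dots> = f (x # y # t)"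
    unfolding x y hdiff_contract_E11_33[OF mk11_in_S11] hdiff_cup_entry13 hdiff_cup_entry12
    by (simp add: algebra_simps)
  finally show ?thesis .
qed

end

lemma hochschild_vanishes_S11_Suc_Suc: "hochschild_vanishes S11 lact ract (Suc (Suc k))"
  unfolding hochschild_vanishes_def
proof
  fix f assume fc: "f \<in> cocycles S11 lact ract (Suc (Suc k))"
  have "f = hdiff S11 lact ract (Suc k) (s11_homotopy f k)"
  proof
    fix xs
    show "f xs = hdiff S11 lact ract (Suc k) (s11_homotopy f k) xs"
    proof (cases "length xs = Suc (Suc k) \<and> set xs \<subseteq> S11")
      case True
      then obtain x y t where "xs = x # y # t" by (metis length_Suc_conv)
      then show ?thesis using hdiff_s11_homotopy[OF fc] True by simp
    next
      case False
      then have "hdiff S11 lact ract (Suc k) (s11_homotopy f k) xs = 0"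
        unfolding hdiff_def by (rule if_not_P)
      then show ?thesis using cochain_eq_0[OF cocycle_cochain[OF fc] False] by simp
    qed
  qed
  then show "f \<in> coboundaries S11 lact ract (Suc (Suc k))"
    using s11_homotopy_cochain[OF cocycle_cochain[OF fc]] by (simp add: coboundaries_def)
qed

theorem lemma5p7:
  fixes R :: "'a::comm_ring_1 itself"
  shows "(\<exists>\<phi> :: ('a m3 list \<Rightarrow> 'a) \<Rightarrow> 'a.
            bij_betw \<phi> (cocycles (S11 :: 'a m3 set) lact ract 0) (UNIV :: 'a set) \<and>
            (\<forall>f \<in> cocycles S11 lact ract 0. \<forall>g \<in> cocycles S11 lact ract 0.
                \<phi> (\<lambda>xs. f xs + g xs) = \<phi> f + \<phi> g) \<and>
            (\<forall>r. \<forall>f \<in> cocycles S11 lact ract 0. \<phi> (\<lambda>xs. r * f xs) = r * \<phi> f))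
       \<and> (\<forall>n>0. hochschild_vanishes (S11 :: 'a m3 set) lact ract n)"
proof (intro conjI exI allI impI)
  let ?C = "cocycles (S11 :: 'a m3 set) lact ract 0"
  show "bij_betw (\<lambda>f. f []) ?C UNIV"
  proof (rule bij_betwI')
    show "f [] = g [] \<longleftrightarrow> f = g" if "f \<in> ?C" "g \<in> ?C" for f g
      using that unfolding cocycles_0_iff by (metis ext)
    show "\<exists>f \<in> ?C. r = f []" for r :: 'a
      by (rule bexI[of _ "\<lambda>xs. if xs = [] then r else 0"]) (auto simp: cocycles_0_iff)
  qed auto
  show "hochschild_vanishes (S11 :: 'a m3 set) lact ract n" if "n > 0" for n
  proof -
    obtain m where "n = Suc m" using \<open>n > 0\<close> gr0_implies_Suc by blast
    then show ?thesis using hochschild_vanishes_S11_1 hochschild_vanishes_S11_Suc_Suc by (cases m) auto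
  qed
qed auto

end
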